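(* Let $(V,\nu,\tau,\tau^* )$ be a finite dimensional PN space such that $\tau^*$ is Archimedean, $\nu_p\neq\varepsilon_\infty$ for every $p\in V$, $\nu(V)\subseteq D^+$ and $\tau(D^+\times D^+)\subseteq D^+$, where the real scalar field is regarded as a PN space $(\mathbb{R},\nu',\tau',\tau'^{*})$ with $\tau'^{*}$ Archimedean, $\nu'_r\neq\varepsilon_\infty$ for all $r\in\mathbb{R}$, and $\nu'$ having the LG-property (for every $x>0$, $\lim_{r\to\infty}\nu'_r(x)=0$). Then a subset $A$ of $V$ is $D$-compact if and only if $A$ is $D$-bounded and closed (in the strong topology).
   Context: $\Delta^{+}$ is the set of functions $F:[-\infty,+\infty]\to[0,1]$ that are left-continuous on $\mathbb{R}$, nondecreasing, with $F(0)=0$ and $F(+\infty)=1$, ordered pointwise; $D^{+}=\{F\in\Delta^{+}: l^{-}F(+\infty)=1\}$, where $l^{-}f(x)=\lim_{t\to x^{-}}f(t)$. $\varepsilon_0$ is the d.f. equal to $0$ for $x\le0$ and $1$ for $x>0$; $\varepsilon_\infty$ is the d.f. equal to $0$ on all of $\mathbb{R}$. A triangle function is a map $\tau:\Delta^+\times\Delta^+\to\Delta^+$ that is associative, commutative, nondecreasing in each argument, with unit $\varepsilon_0$; it is Archimedean if its only idempotents are $\varepsilon_0$ and $\varepsilon_\infty$. A PN space is a quadruple $(V,\nu,\tau,\tau^* )$ with $V$ a real vector space, $\tau\le\tau^*$ continuous triangle functions, and $\nu:V\to\Delta^+$ such that for all $p,q\in V$: (N1) $\nu_p=\varepsilon_0$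 iff $p=\theta$; (N2) $\nu_{-p}=\nu_p$; (N3) $\nu_{p+q}\ge\tau(\nu_p,\nu_q)$; (N4) $\nu_p\le\tau^*(\nu_{\lambda p},\nu_{(1-\lambda)p})$ for all $\lambda\in[0,1]$. The strong topology is generated by $N_p(\lambda)=\{q:\nu_{p-q}(\lambda)>1-\lambda\}$, $\lambda>0$; $(p_m)$ strongly converges to $p$ if for every $\lambda>0$ eventually $p_m\in N_p(\lambda)$. For nonempty $A\subseteq V$, $R_A(x)=l^{-}\inf\{\nu_q(x):q\in A\}$ for $x\in[0,+\infty)$, $R_A(+\infty)=1$; $A$ is $D$-bounded if $R_A\in D^+$. $A$ is $D$-compact if every sequence in $A$ has a subsequence strongly converging to a vector of $A$. *)

theory Defs
  imports "HOL-Analysis.Analysis"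
begin

type_synonym dfun = "ereal \<Rightarrow> real"

definition Delta_plus :: "dfun set" where
  "Delta_plus = {F. (\<forall>x. 0 \<le> F x \<and> F x \<le> 1) \<and> mono F
      \<and> (\<forall>x::real. continuous (at_left x) (\<lambda>t. F (ereal t)))
      \<and> F 0 = 0 \<and> F PInfty = 1}"

definition D_plus :: "dfun set" where
  "D_plus = {F \<in> Delta_plus. ((\<lambda>t::real. F (ereal t)) \<longlongrightarrow> 1) at_top}"

definition eps0 :: dfun where
  "eps0 = (\<lambda>x. if x \<le> 0 then 0 else 1)"

definition epsinf :: dfun where
  "epsinf = (\<lambda>x. if x = PInfty then 1 else 0)"

definition triangle_function :: "(dfun \<Rightarrow> dfun \<Rightarrow> dfun) \<Rightarrow> bool" where
  "triangle_function T \<longleftrightarrow>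
     (\<forall>F\<in>Delta_plus. \<forall>G\<in>Delta_plus. T F G \<in> Delta_plus)
   \<and> (\<forall>F\<in>Delta_plus. \<forall>G\<in>Delta_plus. \<forall>H\<in>Delta_plus. T (T F G) H = T F (T G H))
   \<and> (\<forall>F\<in>Delta_plus. \<forall>G\<in>Delta_plus. T F G = T G F)
   \<and> (\<forall>F\<in>Delta_plus. \<forall>G\<in>Delta_plus. \<forall>H\<in>Delta_plus. F \<le> G \<longrightarrow> T F H \<le> T G H)
   \<and> (\<forall>F\<in>Delta_plus. T F eps0 = F)"

definition archimedean_tf :: "(dfun \<Rightarrow> dfun \<Rightarrow> dfun) \<Rightarrow> bool" where
  "archimedean_tf T \<longleftrightarrow> (\<forall>F\<in>Delta_plus. T F F = F \<longrightarrow> F = eps0 \<or> F = epsinf)"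

text \<open>Weak convergence in Delta_plus (equivalent to convergence in the modified
  Levy / Sibley metric d_S): convergence at every continuity point in (0,+inf).\<close>
definition weak_conv :: "(nat \<Rightarrow> dfun) \<Rightarrow> dfun \<Rightarrow> bool" where
  "weak_conv Fs F \<longleftrightarrow> (\<forall>x::real. 0 < x \<and> isCont (\<lambda>t. F (ereal t)) x
       \<longrightarrow> (\<lambda>n. Fs n (ereal x)) \<longlonglongrightarrow> F (ereal x))"

definition continuous_tf :: "(dfun \<Rightarrow> dfun \<Rightarrow> dfun) \<Rightarrow> bool" where
  "continuous_tf T \<longleftrightarrow> (\<forall>Fs Gs F G. (\<forall>n. Fs n \<in> Delta_plus \<and> Gs n \<in> Delta_plus)
      \<and> F \<in> Delta_plus \<and> G \<in> Delta_plus \<and> weak_conv Fs F \<and> weak_conv Gs G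
      \<longrightarrow> weak_conv (\<lambda>n. T (Fs n) (Gs n)) (T F G))"

definition pn_space :: "('v::real_vector \<Rightarrow> dfun) \<Rightarrow> (dfun \<Rightarrow> dfun \<Rightarrow> dfun)
    \<Rightarrow> (dfun \<Rightarrow> dfun \<Rightarrow> dfun) \<Rightarrow> bool" where
  "pn_space \<nu> T Ts \<longleftrightarrow>
     triangle_function T \<and> triangle_function Ts \<and> continuous_tf T \<and> continuous_tf Ts
   \<and> (\<forall>F\<in>Delta_plus. \<forall>G\<in>Delta_plus. T F G \<le> Ts F G)
   \<and> (\<forall>p. \<nu> p \<in> Delta_plus)
   \<and> (\<forall>p. \<nu> p = eps0 \<longleftrightarrow> p = 0)
   \<and> (\<forall>p. \<nu> (- p) = \<nu> p)
   \<and> (\<forall>p q. \<nu> (p + q) \<ge> T (\<nu> p) (\<nu> q))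
   \<and> (\<forall>p. \<forall>c::real. 0 \<le> c \<and> c \<le> 1 \<longrightarrow> \<nu> p \<le> Ts (\<nu> (c *\<^sub>R p)) (\<nu> ((1 - c) *\<^sub>R p)))"

definition strong_nbhd :: "('v::real_vector \<Rightarrow> dfun) \<Rightarrow> 'v \<Rightarrow> real \<Rightarrow> 'v set" where
  "strong_nbhd \<nu> p l = {q. \<nu> (p - q) (ereal l) > 1 - l}"

definition strong_open :: "('v::real_vector \<Rightarrow> dfun) \<Rightarrow> 'v set \<Rightarrow> bool" where
  "strong_open \<nu> U \<longleftrightarrow> (\<forall>p\<in>U. \<exists>l>0. strong_nbhd \<nu> p l \<subseteq> U)"

definition strong_closed :: "('v::real_vector \<Rightarrow> dfun) \<Rightarrow> 'v set \<Rightarrow> bool" where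
  "strong_closed \<nu> A \<longleftrightarrow> strong_open \<nu> (- A)"

definition strong_conv :: "('v::real_vector \<Rightarrow> dfun) \<Rightarrow> (nat \<Rightarrow> 'v) \<Rightarrow> 'v \<Rightarrow> bool" where
  "strong_conv \<nu> xs p \<longleftrightarrow> (\<forall>l>0. eventually (\<lambda>m. xs m \<in> strong_nbhd \<nu> p l) sequentially)"

text \<open>Probabilistic radius R_A; l^- is the left limit. For negative arguments
  (where the paper leaves it implicit) it is 0, as for every element of Delta_plus.\<close>
definition prob_radius :: "('v::real_vector \<Rightarrow> dfun) \<Rightarrow> 'v set \<Rightarrow> dfun" where
  "prob_radius \<nu> A x = (case x of
       ereal r \<Rightarrow> (if r < 0 then 0 else Lim (at_left r) (\<lambda>t. INF q\<in>A. \<nu> q (ereal t)))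
     | PInfty \<Rightarrow> 1
     | MInfty \<Rightarrow> 0)"

definition D_bounded :: "('v::real_vector \<Rightarrow> dfun) \<Rightarrow> 'v set \<Rightarrow> bool" where
  "D_bounded \<nu> A \<longleftrightarrow> prob_radius \<nu> A \<in> D_plus"

definition D_compact :: "('v::real_vector \<Rightarrow> dfun) \<Rightarrow> 'v set \<Rightarrow> bool" where
  "D_compact \<nu> A \<longleftrightarrow> (\<forall>xs. (\<forall>n. xs n \<in> A) \<longrightarrow>
      (\<exists>(r::nat \<Rightarrow> nat) p. strict_mono r \<and> p \<in> A \<and> strong_conv \<nu> (xs \<circ> r) p))"

definition LG_property :: "(real \<Rightarrow> dfun) \<Rightarrow> bool" where
  "LG_property \<nu>' \<longleftrightarrow> (\<forall>x::real>0. ((\<lambda>r. \<nu>' r (ereal x)) \<longlongrightarrow> 0) at_top)"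

end

theory Submission
  imports Defs
begin

text \<open>
  Axiom (N4) with \<open>\<lambda> = 1/2\<close> gives \<open>\<nu> (2 p) \<le> Ts (\<nu> p) (\<nu> p)\<close>. Hence the left-continuous limit
  of the monotone sequence \<open>\<nu> ((1/2)^j v)\<close>, and likewise that of \<open>\<nu> (2^j y)\<close>, is an
  idempotent of \<open>Ts\<close>, so by the Archimedean property it is \<open>eps0\<close> or \<open>epsinf\<close>.
  For the first sequence this says that \<open>t \<mapsto> t v\<close> is strongly continuous, so a sequence
  converges strongly once its coordinates in a finite basis converge. For the second it says
  that \<open>y = 0\<close> whenever all dyadic multiples \<open>2^j y\<close> stay above a common d.f. in \<open>D_plus\<close>,
  so the coordinates of the points of a D-bounded set are bounded. Bolzano-Weierstrass on the
  coordinates then makes a D-bounded closed set D-compact.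
  Conversely, strong limits are unique, so a D-compact set is closed, and it is D-bounded
  because the limit of any of its sequences has its d.f. in \<open>D_plus\<close>.
\<close>

section \<open>Distribution functions\<close>

lemma Delta_plusD:
  assumes "F \<in> Delta_plus"
  shows "0 \<le> F x" "F x \<le> 1" "mono F" "F 0 = 0" "F PInfty = 1"
    "continuous (at_left (r::real)) (\<lambda>t. F (ereal t))"
  using assms unfolding Delta_plus_def by auto

lemma Delta_plus_mono: "F \<in> Delta_plus \<Longrightarrow> x \<le> y \<Longrightarrow> F x \<le> F y"
  using Delta_plusD(3) by (auto simp: mono_def)

lemma Delta_plus_nonpos: "F \<in> Delta_plus \<Longrightarrow> x \<le> 0 \<Longrightarrow> F x = 0"
  by (metis Delta_plusD(1,4) Delta_plus_mono antisym)

lemma Delta_plus_MInfty: "F \<in> Delta_plus \<Longrightarrow> F MInfty = 0"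
  by (simp add: Delta_plus_nonpos)

lemma Delta_plus_le_eps0: "F \<in> Delta_plus \<Longrightarrow> F \<le> eps0"
  by (rule le_funI) (metis Delta_plusD(2) Delta_plus_nonpos eps0_def order_refl)

lemma Delta_plus_leI:
  assumes "F \<in> Delta_plus" "G \<in> Delta_plus" "\<And>t. F (ereal t) \<le> G (ereal t)"
  shows "F \<le> G"
proof (rule le_funI)
  fix x show "F x \<le> G x"
    by (cases x) (use assms(3) Delta_plusD(5)[OF assms(1)] Delta_plusD(5)[OF assms(2)]
        Delta_plus_MInfty[OF assms(1)] Delta_plus_MInfty[OF assms(2)] in auto)
qed

lemma eps0_in_Delta_plus: "eps0 \<in> Delta_plus"
proof -
  have "continuous (at_left r) (\<lambda>t. eps0 (ereal t))" for r :: real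
  proof -
    have "eventually (\<lambda>t. eps0 (ereal t) = eps0 (ereal r)) (at_left r)"
    proof (cases "r \<le> 0")
      case True
      then show ?thesis by (auto simp: eps0_def intro!: eventually_at_leftI[of "r - 1"])
    next
      case False
      then show ?thesis by (auto simp: eps0_def intro!: eventually_at_leftI[of 0])
    qed
    then show ?thesis unfolding continuous_within by (rule tendsto_eventually)
  qed
  moreover have "mono eps0" by (auto simp: mono_def eps0_def)
  ultimately show ?thesis unfolding Delta_plus_def by (auto simp: eps0_def)
qed

lemma eps0_eqI:
  assumes "F \<in> Delta_plus" "\<And>x. 0 < x \<Longrightarrow> 1 \<le> F (ereal x)"
  shows "F = eps0"
proof (rule antisym[OF Delta_plus_le_eps0[OF assms(1)]])
  show "eps0 \<le> F"
    by (rule Delta_plus_leI[OF eps0_in_Delta_plus assms(1)])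
      (use assms Delta_plusD(1) in \<open>auto simp: eps0_def\<close>)
qed

lemma le_epsinf_imp_eq:
  assumes "F \<in> Delta_plus" "F \<le> epsinf"
  shows "F = epsinf"
proof
  fix x show "F x = epsinf x"
    using Delta_plusD(1,5)[OF assms(1)] le_funD[OF assms(2), of x]
    by (cases "x = PInfty") (auto simp: epsinf_def intro: antisym)
qed

lemma D_plus_ne_epsinf:
  assumes "F \<in> D_plus"
  shows "F \<noteq> epsinf"
proof
  assume "F = epsinf"
  then have "((\<lambda>t::real. 0::real) \<longlongrightarrow> 1) at_top" using assms by (simp add: D_plus_def epsinf_def)
  then show False by (simp add: tendsto_const_iff)
qed

lemma countable_discont_Delta_plus:
  assumes "F \<in> Delta_plus"
  shows "countable {a. \<not> isCont (\<lambda>t. F (ereal t)) a}"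
  by (rule mono_ctble_discont) (auto intro!: monoI Delta_plus_mono[OF assms])

lemma obtain_outside_countable:
  fixes S :: "real set"
  assumes "countable S" "a < b"
  obtains t where "a < t" "t < b" "t \<notin> S"
proof -
  have "\<not> {a<..<b} \<subseteq> S"
    using assms uncountable_open_interval countable_subset by blast
  then obtain t where "t \<in> {a<..<b}" "t \<notin> S" by blast
  then show ?thesis using that by auto
qed

lemma Delta_plus_obtain_cont_point:
  assumes "F \<in> Delta_plus" "a < F (ereal x0)"
  obtains x where "0 < x" "isCont (\<lambda>t. F (ereal t)) x" "a < F (ereal x)"
proof -
  obtain x where x: "max x0 0 < x" "isCont (\<lambda>t. F (ereal t)) x"
    using obtain_outside_countable[OF countable_discont_Delta_plus[OF assms(1)], of "max x0 0" "max x0 0 + 1"]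
    by auto
  have "F (ereal x0) \<le> F (ereal x)" using x(1) by (intro Delta_plus_mono[OF assms(1)]) simp
  then show ?thesis using that x assms(2) by auto
qed

text \<open>Both functions are left-continuous, so an inequality on a dense set of positive
  reals propagates everywhere.\<close>
lemma Delta_plus_le_off_countable:
  fixes S :: "real set"
  assumes "countable S" "F \<in> Delta_plus" "G \<in> Delta_plus"
    and le: "\<And>t. 0 < t \<Longrightarrow> t \<notin> S \<Longrightarrow> F (ereal t) \<le> G (ereal t)"
  shows "F \<le> G"
proof (rule Delta_plus_leI[OF assms(2,3)])
  fix r :: real
  show "F (ereal r) \<le> G (ereal r)"
  proof (rule ccontr)
    assume neg: "\<not> ?thesis"
    then have r: "0 < r" using Delta_plus_nonpos[OF assms(2), of "ereal r"] Delta_plusD(1)[OF assms(3)]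
      by (cases "r \<le> 0") auto
    have "((\<lambda>t. F (ereal t) - G (ereal t)) \<longlongrightarrow> F (ereal r) - G (ereal r)) (at_left r)"
      using Delta_plusD(6)[OF assms(2), of r] Delta_plusD(6)[OF assms(3), of r]
      by (intro tendsto_diff) (auto simp: continuous_within)
    moreover have "0 < F (ereal r) - G (ereal r)" using neg by simp
    ultimately
    have "eventually (\<lambda>t. 0 < F (ereal t) - G (ereal t)) (at_left r)" by (rule order_tendstoD(1))
    then obtain b where b: "b < r" "\<And>t. b < t \<Longrightarrow> t < r \<Longrightarrow> 0 < F (ereal t) - G (ereal t)"
      unfolding eventually_at_left_field by blast
    obtain t where "max b 0 < t" "t < r" "t \<notin> S"
      using obtain_outside_countable[OF assms(1), of "max b 0" r] b r by auto
    then show False using b(2)[of t] le[of t] by simp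
  qed
qed

section \<open>Triangle functions\<close>

lemma triangle_functionD:
  assumes "triangle_function T" "F \<in> Delta_plus" "G \<in> Delta_plus"
  shows "T F G \<in> Delta_plus" "T F G = T G F" "T F eps0 = F"
  using assms unfolding triangle_function_def by blast+

lemma triangle_function_mono:
  assumes "triangle_function T" "F \<in> Delta_plus" "G \<in> Delta_plus"
    "F' \<in> Delta_plus" "G' \<in> Delta_plus" "F \<le> F'" "G \<le> G'"
  shows "T F G \<le> T F' G'"
proof -
  have "T F G \<le> T F' G" using assms unfolding triangle_function_def by blast
  also have "T F' G = T G F'" by (rule triangle_functionD(2)[OF assms(1,4,3)])
  also have "\<dots> \<le> T G' F'" using assms unfolding triangle_function_def by blast
  also have "\<dots> = T F' G'" by (rule triangle_functionD(2)[OF assms(1,5,4)])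
  finally show ?thesis .
qed

lemma triangle_function_le_left:
  assumes "triangle_function T" "F \<in> Delta_plus" "G \<in> Delta_plus"
  shows "T F G \<le> F"
  using triangle_function_mono[OF assms(1,2,3,2) eps0_in_Delta_plus order_refl Delta_plus_le_eps0[OF assms(3)]]
    triangle_functionD(3)[OF assms(1,2,3)] by simp

lemma archimedean_sub_idempotent:
  assumes "triangle_function T" "archimedean_tf T" "L \<in> Delta_plus" "L \<le> T L L" "L \<noteq> epsinf"
  shows "L = eps0"
proof -
  have "T L L = L" using assms(4) triangle_function_le_left[OF assms(1,3,3)] by simp
  then show ?thesis using assms(2,3,5) unfolding archimedean_tf_def by blast
qed

section \<open>Left-continuous regularization\<close>

definition pre_dfun :: "(real \<Rightarrow> real) \<Rightarrow> bool" where
  "pre_dfun f \<longleftrightarrow> mono f \<and> (\<forall>t. 0 \<le> f t \<and> f t \<le> 1) \<and> (\<forall>t\<le>0. f t = 0)"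

definition left_reg :: "(real \<Rightarrow> real) \<Rightarrow> dfun" where
  "left_reg f x = (case x of ereal r \<Rightarrow> Sup (f ` {..<r}) | PInfty \<Rightarrow> 1 | MInfty \<Rightarrow> 0)"

lemma mono_tendsto_at_left_Sup:
  fixes f :: "real \<Rightarrow> real"
  assumes "mono f" "bdd_above (f ` {..<x})"
  shows "(f \<longlongrightarrow> Sup (f ` {..<x})) (at_left x)"
proof (rule order_tendstoI)
  fix a assume "a < Sup (f ` {..<x})"
  then obtain s where s: "s < x" "a < f s" using less_cSup_iff[OF _ assms(2)] by auto
  have "eventually (\<lambda>t. t \<in> {s<..<x}) (at_left x)" using s(1) eventually_at_left_real by blast
  then show "eventually (\<lambda>t. a < f t) (at_left x)"
    by eventually_elim (use s assms(1) in \<open>auto simp: mono_def intro: less_le_trans\<close>)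
next
  fix a assume "Sup (f ` {..<x}) < a"
  have "eventually (\<lambda>t. t < x) (at_left x)" by (simp add: eventually_at_filter)
  then show "eventually (\<lambda>t. f t < a) (at_left x)"
  proof eventually_elim
    case (elim t)
    then have "f t \<le> Sup (f ` {..<x})" using assms(2) by (auto intro: cSup_upper)
    then show ?case using \<open>Sup (f ` {..<x}) < a\<close> by linarith
  qed
qed

context
  fixes f :: "real \<Rightarrow> real"
  assumes f: "pre_dfun f"
begin

lemma pre_dfun_mono: "s \<le> t \<Longrightarrow> f s \<le> f t"
  using f by (auto simp: pre_dfun_def mono_def)

lemma pre_dfun_bounds: "0 \<le> f t" "f t \<le> 1"
  using f by (auto simp: pre_dfun_def)

lemma pre_dfun_bdd_above: "bdd_above (f ` S)"
  using pre_dfun_bounds by (auto intro!: bdd_aboveI)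

lemma left_reg_ereal: "left_reg f (ereal x) = Sup (f ` {..<x})"
  by (simp add: left_reg_def)

lemma left_reg_le: "left_reg f (ereal x) \<le> f x"
  unfolding left_reg_ereal by (rule cSup_least) (auto intro: pre_dfun_mono)

lemma left_reg_ge: "s < x \<Longrightarrow> f s \<le> left_reg f (ereal x)"
  unfolding left_reg_ereal by (rule cSup_upper) (auto intro: pre_dfun_bdd_above)

lemma left_reg_mono_real: "s \<le> t \<Longrightarrow> left_reg f (ereal s) \<le> left_reg f (ereal t)"
  unfolding left_reg_ereal by (rule cSup_subset_mono) (auto intro: pre_dfun_bdd_above)

lemma left_reg_bounds: "0 \<le> left_reg f x \<and> left_reg f x \<le> 1"
proof (cases x)
  case (real r)
  then show ?thesis
    using left_reg_le[of r] left_reg_ge[of "r - 1" r] pre_dfun_bounds[of r] pre_dfun_bounds[of "r - 1"]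
    by simp
qed (simp_all add: left_reg_def)

lemma mono_left_reg: "mono (left_reg f)"
proof
  fix x y :: ereal assume "x \<le> y"
  then show "left_reg f x \<le> left_reg f y"
    using left_reg_bounds[of x] left_reg_bounds[of y] left_reg_mono_real
    by (cases x; cases y) (auto simp: left_reg_def)
qed

lemma left_reg_continuous_at_left: "continuous (at_left x) (\<lambda>t. left_reg f (ereal t))"
proof -
  let ?g = "\<lambda>t. left_reg f (ereal t)"
  have "(?g \<longlongrightarrow> Sup (?g ` {..<x})) (at_left x)"
    using left_reg_bounds by (intro mono_tendsto_at_left_Sup) (auto intro!: monoI left_reg_mono_real bdd_aboveI)
  moreover have "Sup (?g ` {..<x}) = ?g x"
  proof (rule antisym)
    show "Sup (?g ` {..<x}) \<le> ?g x"
      by (rule cSup_least) (auto intro: left_reg_mono_real)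
    show "?g x \<le> Sup (?g ` {..<x})"
      unfolding left_reg_ereal[of x]
    proof (rule cSup_least)
      fix y assume "y \<in> f ` {..<x}"
      then obtain s where "s < x" "y = f s" by auto
      then have "y \<le> ?g ((s + x) / 2)" using left_reg_ge[of s "(s + x) / 2"] by simp
      also have "\<dots> \<le> Sup (?g ` {..<x})"
        using \<open>s < x\<close> left_reg_bounds by (intro cSup_upper) (auto intro!: bdd_aboveI)
      finally show "y \<le> Sup (?g ` {..<x})" .
    qed simp
  qed
  ultimately show ?thesis by (simp add: continuous_within)
qed

lemma left_reg_in_Delta_plus: "left_reg f \<in> Delta_plus"
proof -
  have "left_reg f 0 = 0"
    using left_reg_le[of 0] left_reg_bounds[of 0] f by (simp add: pre_dfun_def zero_ereal_def)
  then show ?thesis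
    using left_reg_bounds mono_left_reg left_reg_continuous_at_left
    by (auto simp: Delta_plus_def left_reg_def)
qed

lemma left_reg_eq_at_cont:
  assumes "isCont (\<lambda>t. left_reg f (ereal t)) x"
  shows "left_reg f (ereal x) = f x"
proof -
  have "((\<lambda>t. left_reg f (ereal t)) \<longlongrightarrow> left_reg f (ereal x)) (at_right x)"
    using assms by (simp add: isCont_def filterlim_at_split)
  moreover have "eventually (\<lambda>t. f x \<le> left_reg f (ereal t)) (at_right x)"
    using eventually_at_right_less[of x] by eventually_elim (rule left_reg_ge)
  ultimately have "f x \<le> left_reg f (ereal x)" by (rule tendsto_lowerbound) simp
  then show ?thesis using left_reg_le[of x] by simp
qed

lemma Delta_plus_le_left_reg:
  assumes "F \<in> Delta_plus" "\<And>t. F (ereal t) \<le> f t"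
  shows "F \<le> left_reg f"
proof (rule Delta_plus_leI[OF assms(1) left_reg_in_Delta_plus])
  fix r :: real
  have lim: "((\<lambda>t. F (ereal t)) \<longlongrightarrow> F (ereal r)) (at_left r)"
    using Delta_plusD(6)[OF assms(1), of r] by (simp add: continuous_within)
  have "eventually (\<lambda>t. t < r) (at_left r)" by (simp add: eventually_at_filter)
  then have "eventually (\<lambda>t. F (ereal t) \<le> left_reg f (ereal r)) (at_left r)"
    by eventually_elim (meson assms(2) left_reg_ge order_trans)
  with lim show "F (ereal r) \<le> left_reg f (ereal r)" by (rule tendsto_upperbound) simp
qed

end

lemma pre_dfun_INF:
  assumes "I \<noteq> {}" "\<And>i. i \<in> I \<Longrightarrow> F i \<in> Delta_plus"
  shows "pre_dfun (\<lambda>t. INF i\<in>I. F i (ereal t))"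
proof -
  have bdd: "bdd_below ((\<lambda>i. F i (ereal t)) ` I)" for t
    using assms(2) Delta_plusD(1) by (auto intro!: bdd_belowI)
  have "mono (\<lambda>t. INF i\<in>I. F i (ereal t))"
    by (intro monoI cINF_mono[OF assms(1) bdd]) (metis Delta_plus_mono assms(2) ereal_less_eq(3))
  moreover have "0 \<le> (INF i\<in>I. F i (ereal t))" for t
    using assms Delta_plusD(1) by (intro cINF_greatest) auto
  moreover have "(INF i\<in>I. F i (ereal t)) \<le> 1" for t
    using assms Delta_plusD(2) cINF_lower[OF bdd] by (meson ex_in_conv order_trans)
  moreover have "(INF i\<in>I. F i (ereal t)) = 0" if "t \<le> 0" for t
    using assms that by (simp add: Delta_plus_nonpos)
  ultimately show ?thesis unfolding pre_dfun_def by auto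
qed

lemma pre_dfun_SUP:
  assumes "I \<noteq> {}" "\<And>i. i \<in> I \<Longrightarrow> F i \<in> Delta_plus"
  shows "pre_dfun (\<lambda>t. SUP i\<in>I. F i (ereal t))"
proof -
  have bdd: "bdd_above ((\<lambda>i. F i (ereal t)) ` I)" for t
    using assms(2) Delta_plusD(2) by (auto intro!: bdd_aboveI)
  have "mono (\<lambda>t. SUP i\<in>I. F i (ereal t))"
    by (intro monoI cSUP_mono[OF assms(1) bdd]) (metis Delta_plus_mono assms(2) ereal_less_eq(3))
  moreover have "(SUP i\<in>I. F i (ereal t)) \<le> 1" for t
    using assms Delta_plusD(2) by (intro cSUP_least) auto
  moreover have "0 \<le> (SUP i\<in>I. F i (ereal t))" for t
    using assms Delta_plusD(1) cSUP_upper[OF _ bdd] by (meson ex_in_conv order_trans)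
  moreover have "(SUP i\<in>I. F i (ereal t)) = 0" if "t \<le> 0" for t
    using assms that by (simp add: Delta_plus_nonpos)
  ultimately show ?thesis unfolding pre_dfun_def by auto
qed

section \<open>Weak convergence\<close>

lemma eps0_isCont: "0 < x \<Longrightarrow> isCont (\<lambda>t. eps0 (ereal t)) x"
  unfolding isCont_def
  by (rule tendsto_eventually) (auto simp: eps0_def eventually_at_filter
      intro: eventually_mono[OF eventually_nhds_in_open[of "{0<..}" x]])

lemma weak_conv_eps0_iff: "weak_conv Fs eps0 \<longleftrightarrow> (\<forall>x>0. (\<lambda>n. Fs n (ereal x)) \<longlonglongrightarrow> 1)"
  unfolding weak_conv_def using eps0_isCont by (auto simp: eps0_def)

lemma weak_conv_const: "weak_conv (\<lambda>n. F) F"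
  by (simp add: weak_conv_def)

lemma continuous_tfD:
  assumes "continuous_tf T" "\<And>n. Fs n \<in> Delta_plus" "\<And>n. Gs n \<in> Delta_plus"
    "F \<in> Delta_plus" "G \<in> Delta_plus" "weak_conv Fs F" "weak_conv Gs G"
  shows "weak_conv (\<lambda>n. T (Fs n) (Gs n)) (T F G)"
  using assms unfolding continuous_tf_def by blast

lemma weak_conv_tf_eps0:
  assumes "triangle_function T" "continuous_tf T"
    and "F \<in> Delta_plus" "\<And>n. Gs n \<in> Delta_plus" "weak_conv Gs eps0"
  shows "weak_conv (\<lambda>n. T F (Gs n)) F"
proof -
  have "weak_conv (\<lambda>n. T F (Gs n)) (T F eps0)"
    by (rule continuous_tfD[OF assms(2,3,4,3) eps0_in_Delta_plus weak_conv_const assms(5)])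
  then show ?thesis using triangle_functionD(3)[OF assms(1,3,3)] by simp
qed

lemma weak_conv_le:
  assumes "weak_conv Fs F" "weak_conv Gs G" "F \<in> Delta_plus" "G \<in> Delta_plus"
    and le: "eventually (\<lambda>n. Fs n \<le> Gs n) sequentially"
  shows "F \<le> G"
proof (rule Delta_plus_le_off_countable[OF _ assms(3,4)])
  show "countable ({a. \<not> isCont (\<lambda>t. F (ereal t)) a} \<union> {a. \<not> isCont (\<lambda>t. G (ereal t)) a})"
    using countable_discont_Delta_plus assms(3,4) by blast
  fix t :: real assume "0 < t" "t \<notin> {a. \<not> isCont (\<lambda>t. F (ereal t)) a} \<union> {a. \<not> isCont (\<lambda>t. G (ereal t)) a}"
  then have limF: "(\<lambda>n. Fs n (ereal t)) \<longlonglongrightarrow> F (ereal t)"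
    and limG: "(\<lambda>n. Gs n (ereal t)) \<longlonglongrightarrow> G (ereal t)"
    using assms(1,2) by (auto simp: weak_conv_def)
  have "eventually (\<lambda>n. Fs n (ereal t) \<le> Gs n (ereal t)) sequentially"
    using le by eventually_elim (simp add: le_fun_def)
  then show "F (ereal t) \<le> G (ereal t)" by (rule tendsto_le[OF sequentially_bot limG limF])
qed

lemma weak_conv_sub_idempotent:
  assumes T: "triangle_function T" "continuous_tf T"
    and F: "\<And>j. F j \<in> Delta_plus" and L: "L \<in> Delta_plus" and conv: "weak_conv F L"
    and step: "\<And>j. F (Suc j) \<le> T (F j) (F j)"
  shows "L \<le> T L L"
proof (rule weak_conv_le)
  show "weak_conv (\<lambda>j. F (Suc j)) L"
    using conv unfolding weak_conv_def by (auto intro: LIMSEQ_Suc)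
  show "weak_conv (\<lambda>j. T (F j) (F j)) (T L L)"
    by (rule continuous_tfD[OF T(2) F F L L conv conv])
qed (use step L triangle_functionD(1)[OF T(1) L L] in auto)

lemma weak_conv_decseq:
  assumes F: "\<And>j. F j \<in> Delta_plus" and dec: "\<And>j. F (Suc j) \<le> F j"
  shows "weak_conv F (left_reg (\<lambda>t. INF j. F j (ereal t)))"
  unfolding weak_conv_def
proof (intro allI impI)
  let ?H = "\<lambda>t. INF j. F j (ereal t)"
  have H: "pre_dfun ?H" by (rule pre_dfun_INF) (use F in auto)
  fix x :: real assume "0 < x \<and> isCont (\<lambda>t. left_reg ?H (ereal t)) x"
  then have "left_reg ?H (ereal x) = ?H x" by (intro left_reg_eq_at_cont[OF H]) simp
  moreover have "(\<lambda>j. F j (ereal x)) \<longlonglongrightarrow> ?H x"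
    using F Delta_plusD(1) dec
    by (intro LIMSEQ_decseq_INF) (auto intro!: bdd_belowI decseq_SucI simp: le_fun_def)
  ultimately show "(\<lambda>j. F j (ereal x)) \<longlonglongrightarrow> left_reg ?H (ereal x)" by simp
qed

section \<open>Probabilistic normed spaces\<close>

locale prob_normed_space =
  fixes \<nu> :: "'v::real_vector \<Rightarrow> dfun" and T Ts :: "dfun \<Rightarrow> dfun \<Rightarrow> dfun"
  assumes pn_space: "pn_space \<nu> T Ts"
begin

lemma triangle_function_T: "triangle_function T"
  and triangle_function_Ts: "triangle_function Ts"
  and continuous_T: "continuous_tf T"
  and continuous_Ts: "continuous_tf Ts"
  and nu_in_Delta_plus: "\<nu> p \<in> Delta_plus"
  and nu_eq_eps0_iff: "\<nu> p = eps0 \<longleftrightarrow> p = 0"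
  and nu_minus: "\<nu> (- p) = \<nu> p"
  and nu_add: "T (\<nu> p) (\<nu> q) \<le> \<nu> (p + q)"
  and nu_split: "0 \<le> c \<Longrightarrow> c \<le> 1 \<Longrightarrow> \<nu> p \<le> Ts (\<nu> (c *\<^sub>R p)) (\<nu> ((1 - c) *\<^sub>R p))"
  using pn_space by (simp_all add: pn_space_def)

lemma nu_commute: "\<nu> (p - q) = \<nu> (q - p)"
  by (metis minus_diff_eq nu_minus)

lemma nu_le_1: "\<nu> p x \<le> 1"
  by (rule Delta_plusD(2)[OF nu_in_Delta_plus])

lemma nu_nonneg: "0 \<le> \<nu> p x"
  by (rule Delta_plusD(1)[OF nu_in_Delta_plus])

lemma nu_mono: "x \<le> y \<Longrightarrow> \<nu> p x \<le> \<nu> p y"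
  by (rule Delta_plus_mono[OF nu_in_Delta_plus])

lemma nu_scaleR_antimono:
  assumes "0 \<le> s" "s \<le> t"
  shows "\<nu> (t *\<^sub>R p) \<le> \<nu> (s *\<^sub>R p)"
proof (cases "t = 0")
  case False
  then have t: "0 < t" using assms by simp
  have "\<nu> (t *\<^sub>R p) \<le> Ts (\<nu> ((s / t) *\<^sub>R (t *\<^sub>R p))) (\<nu> ((1 - s / t) *\<^sub>R (t *\<^sub>R p)))"
    using assms t by (intro nu_split) auto
  also have "\<dots> \<le> \<nu> ((s / t) *\<^sub>R (t *\<^sub>R p))"
    by (rule triangle_function_le_left[OF triangle_function_Ts nu_in_Delta_plus nu_in_Delta_plus])
  finally show ?thesis using t by simp
qed (use assms in simp)

lemma nu_scaleR_abs: "\<nu> (\<bar>s\<bar> *\<^sub>R p) = \<nu> (s *\<^sub>R p)"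
  using nu_minus[of "s *\<^sub>R p"] by (cases "0 \<le> s") auto

lemma nu_scaleR_antimono_abs: "\<bar>s\<bar> \<le> \<bar>t\<bar> \<Longrightarrow> \<nu> (t *\<^sub>R p) \<le> \<nu> (s *\<^sub>R p)"
  using nu_scaleR_antimono[of "\<bar>s\<bar>" "\<bar>t\<bar>" p] by (simp add: nu_scaleR_abs)

lemma nu_scaleR_2: "\<nu> (2 *\<^sub>R p) \<le> Ts (\<nu> p) (\<nu> p)"
  using nu_split[of "1/2" "2 *\<^sub>R p"] by simp

lemma nu_tendsto_oneI:
  assumes "\<And>a. a < 1 \<Longrightarrow> eventually (\<lambda>n. a < \<nu> (xs n) x) sequentially"
  shows "(\<lambda>n. \<nu> (xs n) x) \<longlonglongrightarrow> 1"
proof (rule order_tendstoI[OF assms])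
  fix a :: real assume "1 < a"
  then show "eventually (\<lambda>n. \<nu> (xs n) x < a) sequentially"
    using nu_le_1 by (intro always_eventually allI) (meson le_less_trans)
qed

lemma strong_conv_iff:
  "strong_conv \<nu> xs p \<longleftrightarrow> (\<forall>x>0. (\<lambda>n. \<nu> (xs n - p) (ereal x)) \<longlonglongrightarrow> 1)"
proof
  assume conv: "strong_conv \<nu> xs p"
  show "\<forall>x>0. (\<lambda>n. \<nu> (xs n - p) (ereal x)) \<longlonglongrightarrow> 1"
  proof (intro allI impI nu_tendsto_oneI)
    fix x a :: real assume "0 < x" "a < 1"
    define l where "l = min x (1 - a)"
    have l: "0 < l" "l \<le> x" "a \<le> 1 - l" using \<open>a < 1\<close> \<open>0 < x\<close> by (auto simp: l_def)
    have "eventually (\<lambda>n. xs n \<in> strong_nbhd \<nu> p l) sequentially"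
      using conv l by (simp add: strong_conv_def)
    then show "eventually (\<lambda>n. a < \<nu> (xs n - p) (ereal x)) sequentially"
    proof eventually_elim
      case (elim n)
      then have "1 - l < \<nu> (xs n - p) (ereal l)" by (simp add: strong_nbhd_def nu_commute[of p])
      also have "\<dots> \<le> \<nu> (xs n - p) (ereal x)" using l by (intro nu_mono) simp
      finally show ?case using l by linarith
    qed
  qed
next
  assume conv: "\<forall>x>0. (\<lambda>n. \<nu> (xs n - p) (ereal x)) \<longlonglongrightarrow> 1"
  show "strong_conv \<nu> xs p" unfolding strong_conv_def strong_nbhd_def
  proof (intro allI impI)
    fix l :: real assume "0 < l"
    then have "eventually (\<lambda>n. 1 - l < \<nu> (xs n - p) (ereal l)) sequentially"
      using conv by (intro order_tendstoD(1)) auto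
    then show "eventually (\<lambda>n. xs n \<in> {q. 1 - l < \<nu> (p - q) (ereal l)}) sequentially"
      by (simp add: nu_commute[of p])
  qed
qed

lemma strong_conv_iff_weak_conv: "strong_conv \<nu> xs p \<longleftrightarrow> weak_conv (\<lambda>n. \<nu> (xs n - p)) eps0"
  by (simp add: strong_conv_iff weak_conv_eps0_iff)

lemma strong_conv_const: "strong_conv \<nu> (\<lambda>n. p) p"
  using nu_eq_eps0_iff[of 0] by (simp add: strong_conv_iff eps0_def)

lemma strong_conv_subseq: "strong_conv \<nu> xs p \<Longrightarrow> strict_mono r \<Longrightarrow> strong_conv \<nu> (xs \<circ> r) p"
  unfolding strong_conv_iff using LIMSEQ_subseq_LIMSEQ by (fastforce simp: o_def)

lemma strong_conv_add:
  assumes "strong_conv \<nu> xs p" "strong_conv \<nu> ys q"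
  shows "strong_conv \<nu> (\<lambda>n. xs n + ys n) (p + q)"
proof -
  have "weak_conv (\<lambda>n. T (\<nu> (xs n - p)) (\<nu> (ys n - q))) (T eps0 eps0)"
    using assms by (intro continuous_tfD[OF continuous_T nu_in_Delta_plus nu_in_Delta_plus
          eps0_in_Delta_plus eps0_in_Delta_plus]) (simp_all add: strong_conv_iff_weak_conv)
  then have lim: "(\<lambda>n. T (\<nu> (xs n - p)) (\<nu> (ys n - q)) (ereal x)) \<longlonglongrightarrow> 1" if "0 < x" for x
    using that triangle_functionD(3)[OF triangle_function_T eps0_in_Delta_plus eps0_in_Delta_plus]
    by (simp add: weak_conv_eps0_iff)
  have le: "T (\<nu> (xs n - p)) (\<nu> (ys n - q)) x \<le> \<nu> (xs n + ys n - (p + q)) x" for n x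
    using le_funD[OF nu_add[of "xs n - p" "ys n - q"]] by (simp add: algebra_simps)
  show ?thesis unfolding strong_conv_iff
  proof (intro allI impI)
    fix x :: real assume "0 < x"
    show "(\<lambda>n. \<nu> (xs n + ys n - (p + q)) (ereal x)) \<longlonglongrightarrow> 1"
      by (rule tendsto_sandwich[OF always_eventually always_eventually lim[OF \<open>0 < x\<close>] tendsto_const])
        (use le nu_le_1 in auto)
  qed
qed

lemma strong_conv_unique:
  assumes "strong_conv \<nu> xs p" "strong_conv \<nu> xs q"
  shows "p = q"
proof -
  have "strong_conv \<nu> (\<lambda>n. p - xs n) 0"
    using assms(1) by (simp add: strong_conv_iff nu_commute[of p])
  from strong_conv_add[OF this assms(2)] have "strong_conv \<nu> (\<lambda>n. p) q" by simp
  then have "(\<lambda>n. \<nu> (p - q) (ereal x)) \<longlonglongrightarrow> 1" if "0 < x" for x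
    using that by (simp add: strong_conv_iff)
  then have "\<nu> (p - q) = eps0"
    by (intro eps0_eqI[OF nu_in_Delta_plus]) (simp add: LIMSEQ_const_iff)
  then show ?thesis by (simp add: nu_eq_eps0_iff)
qed

lemma strong_conv_scaleR_pow2:
  assumes "strong_conv \<nu> xs p"
  shows "strong_conv \<nu> (\<lambda>n. (2 ^ j) *\<^sub>R xs n) ((2 ^ j) *\<^sub>R p)"
proof (induction j)
  case (Suc j)
  from strong_conv_add[OF Suc Suc] show ?case by (simp add: scaleR_2 flip: scaleR_scaleR)
qed (use assms in simp)

lemma strong_conv_imp_le_nu:
  assumes conv: "strong_conv \<nu> xs p" and R: "R \<in> Delta_plus"
    and le: "eventually (\<lambda>n. R \<le> \<nu> (xs n)) sequentially"
  shows "R \<le> \<nu> p"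
proof (rule weak_conv_le[OF _ weak_conv_const R nu_in_Delta_plus])
  show "weak_conv (\<lambda>n. T R (\<nu> (p - xs n))) R"
    using conv by (intro weak_conv_tf_eps0[OF triangle_function_T continuous_T R nu_in_Delta_plus])
      (simp add: strong_conv_iff_weak_conv nu_commute[of p])
  show "eventually (\<lambda>n. T R (\<nu> (p - xs n)) \<le> \<nu> p) sequentially"
    using le
  proof eventually_elim
    case (elim n)
    have "T R (\<nu> (p - xs n)) \<le> T (\<nu> (xs n)) (\<nu> (p - xs n))"
      by (intro triangle_function_mono[OF triangle_function_T] R nu_in_Delta_plus elim order_refl)
    also have "\<dots> \<le> \<nu> (xs n + (p - xs n))" by (rule nu_add)
    finally show ?case by simp
  qed
qed

lemma strong_conv_imp_eventually_less_nu:
  assumes conv: "strong_conv \<nu> xs p" and x: "0 < x" "isCont (\<lambda>t. \<nu> p (ereal t)) x"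
    and a: "a < \<nu> p (ereal x)"
  shows "eventually (\<lambda>n. a < \<nu> (xs n) (ereal x)) sequentially"
proof -
  have "weak_conv (\<lambda>n. T (\<nu> p) (\<nu> (xs n - p))) (\<nu> p)"
    using conv by (intro weak_conv_tf_eps0[OF triangle_function_T continuous_T nu_in_Delta_plus nu_in_Delta_plus])
      (simp add: strong_conv_iff_weak_conv)
  then have "(\<lambda>n. T (\<nu> p) (\<nu> (xs n - p)) (ereal x)) \<longlonglongrightarrow> \<nu> p (ereal x)"
    using x by (simp add: weak_conv_def)
  from order_tendstoD(1)[OF this a]
  show ?thesis
  proof eventually_elim
    case (elim n)
    also have "T (\<nu> p) (\<nu> (xs n - p)) (ereal x) \<le> \<nu> (p + (xs n - p)) (ereal x)"
      by (rule le_funD[OF nu_add])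
    finally show ?case by simp
  qed
qed

lemma strong_conv_if_in_strong_nbhd:
  assumes "\<And>n. xs n \<in> strong_nbhd \<nu> p (1 / Suc n)"
  shows "strong_conv \<nu> xs p"
  unfolding strong_conv_iff
proof (intro allI impI nu_tendsto_oneI)
  fix x a :: real assume "0 < x" "a < 1"
  define m where "m = min x (1 - a)"
  have m: "0 < m" using \<open>0 < x\<close> \<open>a < 1\<close> by (simp add: m_def)
  have "eventually (\<lambda>n. 1 / real (Suc n) < m) sequentially"
    using order_tendstoD(2)[OF LIMSEQ_inverse_real_of_nat m] by (simp add: inverse_eq_divide)
  then show "eventually (\<lambda>n. a < \<nu> (xs n - p) (ereal x)) sequentially"
  proof eventually_elim
    case (elim n)
    then have small: "1 / real (Suc n) < x" "1 / real (Suc n) < 1 - a" by (simp_all add: m_def)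
    have "1 - 1 / real (Suc n) < \<nu> (xs n - p) (ereal (1 / Suc n))"
      using assms[of n] by (simp add: strong_nbhd_def nu_commute[of p])
    also have "\<dots> \<le> \<nu> (xs n - p) (ereal x)" using small by (intro nu_mono) simp
    finally show ?case using small by linarith
  qed
qed

lemma prob_radius_eq_left_reg:
  assumes "A \<noteq> {}"
  shows "prob_radius \<nu> A = left_reg (\<lambda>t. INF q\<in>A. \<nu> q (ereal t))"
proof
  let ?g = "\<lambda>t. INF q\<in>A. \<nu> q (ereal t)"
  have g: "pre_dfun ?g" by (rule pre_dfun_INF[OF assms nu_in_Delta_plus])
  fix x show "prob_radius \<nu> A x = left_reg ?g x"
  proof (cases x)
    case (real r)
    show ?thesis
    proof (cases "r < 0")
      case True
      then show ?thesis using real left_reg_le[OF g, of r] Delta_plusD(1)[OF left_reg_in_Delta_plus[OF g]]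
        g by (auto simp: prob_radius_def pre_dfun_def intro: antisym)
    next
      case False
      have "(?g \<longlongrightarrow> Sup (?g ` {..<r})) (at_left r)"
        using g by (intro mono_tendsto_at_left_Sup) (auto simp: pre_dfun_def intro!: bdd_aboveI)
      then have "Lim (at_left r) ?g = left_reg ?g (ereal r)"
        by (simp add: tendsto_Lim left_reg_def)
      then show ?thesis using real False by (simp add: prob_radius_def)
    qed
  qed (simp_all add: prob_radius_def left_reg_def)
qed

lemma prob_radius_in_Delta_plus: "A \<noteq> {} \<Longrightarrow> prob_radius \<nu> A \<in> Delta_plus"
  by (simp add: prob_radius_eq_left_reg left_reg_in_Delta_plus pre_dfun_INF nu_in_Delta_plus)

lemma prob_radius_le_nu:
  assumes "q \<in> A"
  shows "prob_radius \<nu> A \<le> \<nu> q"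
proof (rule Delta_plus_leI[OF prob_radius_in_Delta_plus nu_in_Delta_plus])
  let ?g = "\<lambda>t. INF q\<in>A. \<nu> q (ereal t)"
  have A: "A \<noteq> {}" using assms by blast
  fix t
  have "left_reg ?g (ereal t) \<le> ?g t" by (rule left_reg_le[OF pre_dfun_INF[OF A nu_in_Delta_plus]])
  also have "\<dots> \<le> \<nu> q (ereal t)" using assms nu_nonneg by (intro cINF_lower) (auto intro!: bdd_belowI)
  finally show "prob_radius \<nu> A (ereal t) \<le> \<nu> q (ereal t)" by (simp add: prob_radius_eq_left_reg[OF A])
qed (use assms in blast)

lemma D_boundedI:
  assumes A: "A \<noteq> {}" and high: "\<And>a. a < 1 \<Longrightarrow> \<exists>t. \<forall>q\<in>A. a \<le> \<nu> q (ereal t)"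
  shows "D_bounded \<nu> A"
proof -
  let ?g = "\<lambda>t. INF q\<in>A. \<nu> q (ereal t)"
  have "((\<lambda>s. prob_radius \<nu> A (ereal s)) \<longlongrightarrow> 1) at_top"
  proof (rule order_tendstoI)
    fix a :: real assume "a < 1"
    then obtain t where t: "\<forall>q\<in>A. (a + 1) / 2 \<le> \<nu> q (ereal t)" using high[of "(a + 1) / 2"] by auto
    show "eventually (\<lambda>s. a < prob_radius \<nu> A (ereal s)) at_top"
    proof (rule eventually_at_top_linorderI[of "t + 1"])
      fix s assume "t + 1 \<le> s"
      have "a < (a + 1) / 2" using \<open>a < 1\<close> by simp
      also have "\<dots> \<le> ?g t" using t A by (intro cINF_greatest) auto
      also have "\<dots> \<le> prob_radius \<nu> A (ereal s)"
        unfolding prob_radius_eq_left_reg[OF A] using \<open>t + 1 \<le> s\<close>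
        by (intro left_reg_ge[OF pre_dfun_INF[OF A nu_in_Delta_plus]]) simp
      finally show "a < prob_radius \<nu> A (ereal s)" .
    qed
  next
    fix a :: real assume "1 < a"
    then show "eventually (\<lambda>s. prob_radius \<nu> A (ereal s) < a) at_top"
      using Delta_plusD(2)[OF prob_radius_in_Delta_plus[OF A]]
      by (intro always_eventually allI) (meson le_less_trans)
  qed
  then show ?thesis using prob_radius_in_Delta_plus[OF A] by (simp add: D_bounded_def D_plus_def)
qed

lemma strong_closed_imp_limit_in:
  assumes "strong_closed \<nu> A" "\<And>n. xs n \<in> A" "strong_conv \<nu> xs p"
  shows "p \<in> A"
proof (rule ccontr)
  assume "p \<notin> A"
  then obtain l where "0 < l" and nbhd: "strong_nbhd \<nu> p l \<subseteq> - A"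
    using assms(1) unfolding strong_closed_def strong_open_def by blast
  then have "eventually (\<lambda>n. xs n \<in> strong_nbhd \<nu> p l) sequentially"
    using assms(3) by (simp add: strong_conv_def)
  then have "eventually (\<lambda>n. False) sequentially"
    by eventually_elim (use nbhd assms(2) in blast)
  then show False by simp
qed

lemma D_compact_imp_strong_closed:
  assumes "D_compact \<nu> A"
  shows "strong_closed \<nu> A"
  unfolding strong_closed_def strong_open_def
proof (rule ballI, rule ccontr)
  fix p assume "p \<in> - A" and not_open: "\<not> (\<exists>l>0. strong_nbhd \<nu> p l \<subseteq> - A)"
  have "\<exists>q. q \<in> A \<and> q \<in> strong_nbhd \<nu> p (1 / Suc n)" for n
  proof -
    have "\<not> strong_nbhd \<nu> p (1 / Suc n) \<subseteq> - A" using not_open by simp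
    then show ?thesis by blast
  qed
  then obtain xs where A: "\<And>n. xs n \<in> A" and near: "\<And>n. xs n \<in> strong_nbhd \<nu> p (1 / Suc n)"
    by metis
  obtain r p' where "strict_mono r" "p' \<in> A" "strong_conv \<nu> (xs \<circ> r) p'"
    using assms A unfolding D_compact_def by blast
  moreover have "strong_conv \<nu> (xs \<circ> r) p"
    using strong_conv_if_in_strong_nbhd[OF near] \<open>strict_mono r\<close> by (rule strong_conv_subseq)
  ultimately have "p' = p" by (blast intro: strong_conv_unique)
  then show False using \<open>p \<in> - A\<close> \<open>p' \<in> A\<close> by simp
qed

text \<open>If the values \<open>\<nu> q (n)\<close> stayed below \<open>a < 1\<close> along a sequence in \<open>A\<close>, no subsequence
  could converge: at a continuity point of the limit's d.f. above level \<open>a\<close>, the terms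
  eventually exceed \<open>a\<close>.\<close>
lemma D_compact_imp_D_bounded:
  assumes compact: "D_compact \<nu> A" and A: "A \<noteq> {}" and D: "\<And>p. \<nu> p \<in> D_plus"
  shows "D_bounded \<nu> A"
proof (rule D_boundedI[OF A], rule ccontr)
  fix a :: real assume "a < 1" "\<nexists>t. \<forall>q\<in>A. a \<le> \<nu> q (ereal t)"
  then have "\<exists>q\<in>A. \<nu> q (ereal (real n)) < a" for n by (auto simp: not_le)
  then obtain xs where A: "\<And>n. xs n \<in> A" and low: "\<And>n. \<nu> (xs n) (ereal (real n)) < a"
    by metis
  obtain r p where r: "strict_mono r" and conv: "strong_conv \<nu> (xs \<circ> r) p"
    using compact A unfolding D_compact_def by blast
  have "((\<lambda>t. \<nu> p (ereal t)) \<longlongrightarrow> 1) at_top" using D by (simp add: D_plus_def)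
  then have "eventually (\<lambda>t. a < \<nu> p (ereal t)) at_top" using \<open>a < 1\<close> by (rule order_tendstoD(1))
  then obtain x0 where "a < \<nu> p (ereal x0)" by (auto simp: eventually_at_top_linorder)
  then obtain x where x: "0 < x" "isCont (\<lambda>t. \<nu> p (ereal t)) x" "a < \<nu> p (ereal x)"
    by (rule Delta_plus_obtain_cont_point[OF nu_in_Delta_plus])
  obtain N :: nat where "x \<le> N" using real_arch_simple by blast
  have "eventually (\<lambda>n. a < \<nu> (xs (r n)) (ereal x)) sequentially"
    using strong_conv_imp_eventually_less_nu[OF conv x] by simp
  moreover have "eventually (\<lambda>n. x \<le> r n) sequentially"
  proof (rule eventually_sequentiallyI[of N])
    fix n assume "N \<le> n"
    then have "real N \<le> real (r n)" using seq_suble[OF r, of n] by simp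
    then show "x \<le> real (r n)" using \<open>x \<le> N\<close> by linarith
  qed
  ultimately have "eventually (\<lambda>n. False) sequentially"
  proof eventually_elim
    case (elim n)
    then have "\<nu> (xs (r n)) (ereal x) \<le> \<nu> (xs (r n)) (ereal (real (r n)))" by (intro nu_mono) simp
    then show False using elim low[of "r n"] by simp
  qed
  then show False by simp
qed

end

section \<open>Archimedean probabilistic normed spaces\<close>

locale archimedean_pn_space = prob_normed_space +
  assumes archimedean_Ts: "archimedean_tf Ts"
    and nu_ne_epsinf: "\<nu> p \<noteq> epsinf"
begin

lemma SUP_nu_scaleR_half_pow:
  assumes "0 < x"
  shows "(SUP j. \<nu> (((1/2::real) ^ j) *\<^sub>R v) (ereal x)) = 1"
proof -
  define P where "P j = \<nu> (((1/2::real) ^ j) *\<^sub>R v)" for j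
  define G where "G t = (SUP j. P j (ereal t))" for t
  define L where "L = left_reg G"
  have P: "P j \<in> Delta_plus" for j unfolding P_def by (rule nu_in_Delta_plus)
  have G: "pre_dfun G" unfolding G_def by (rule pre_dfun_SUP) (use P in auto)
  have L: "L \<in> Delta_plus" unfolding L_def by (rule left_reg_in_Delta_plus[OF G])
  have bdd: "bdd_above (range (\<lambda>j. P j (ereal t)))" for t
    using Delta_plusD(2)[OF P] by (auto intro!: bdd_aboveI)
  have PL: "P j \<le> L" for j
    unfolding L_def by (rule Delta_plus_le_left_reg[OF G P]) (auto simp: G_def intro: cSUP_upper[OF _ bdd])
  have PTs: "P j \<le> Ts L L" for j
  proof -
    have "P j = \<nu> (2 *\<^sub>R (((1/2::real) ^ Suc j) *\<^sub>R v))" by (simp add: P_def)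
    also have "\<dots> \<le> Ts (P (Suc j)) (P (Suc j))" unfolding P_def by (rule nu_scaleR_2)
    also have "\<dots> \<le> Ts L L" by (rule triangle_function_mono[OF triangle_function_Ts P P L L PL PL])
    finally show ?thesis .
  qed
  have "L \<le> Ts L L"
  proof (rule Delta_plus_leI[OF L triangle_functionD(1)[OF triangle_function_Ts L L]])
    fix t
    have "L (ereal t) \<le> G t" unfolding L_def by (rule left_reg_le[OF G])
    also have "\<dots> \<le> Ts L L (ereal t)" unfolding G_def by (rule cSUP_least) (auto intro: le_funD[OF PTs])
    finally show "L (ereal t) \<le> Ts L L (ereal t)" .
  qed
  moreover have "L \<noteq> epsinf"
    using PL[of 0] le_epsinf_imp_eq[OF P, of 0] nu_ne_epsinf by (auto simp: P_def)
  ultimately have "L = eps0"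
    by (rule archimedean_sub_idempotent[OF triangle_function_Ts archimedean_Ts L])
  then have "L (ereal x) = 1" using assms by (simp add: eps0_def)
  then show ?thesis
    using left_reg_le[OF G, of x] pre_dfun_bounds[OF G, of x] unfolding L_def G_def P_def by linarith
qed

lemma strong_conv_scaleR_half_pow: "strong_conv \<nu> (\<lambda>j. ((1/2) ^ j) *\<^sub>R v) 0"
proof -
  have "(\<lambda>j. \<nu> (((1/2::real) ^ j) *\<^sub>R v) (ereal x)) \<longlonglongrightarrow> 1" if "0 < x" for x
  proof -
    have "\<nu> (((1/2::real) ^ j) *\<^sub>R v) \<le> \<nu> (((1/2::real) ^ Suc j) *\<^sub>R v)" for j
      by (intro nu_scaleR_antimono power_decreasing) simp_all
    then have inc: "incseq (\<lambda>j. \<nu> (((1/2::real) ^ j) *\<^sub>R v) (ereal x))"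
      by (intro incseq_SucI) (simp add: le_fun_def)
    have bdd: "bdd_above (range (\<lambda>j. \<nu> (((1/2::real) ^ j) *\<^sub>R v) (ereal x)))"
      using nu_le_1 by (auto intro!: bdd_aboveI)
    from LIMSEQ_incseq_SUP[OF bdd inc] show ?thesis by (simp only: SUP_nu_scaleR_half_pow[OF that])
  qed
  then show ?thesis by (simp add: strong_conv_iff)
qed

lemma strong_conv_scaleR_zero:
  assumes "t \<longlonglongrightarrow> 0"
  shows "strong_conv \<nu> (\<lambda>n. t n *\<^sub>R v) 0"
  unfolding strong_conv_iff
proof (intro allI impI nu_tendsto_oneI)
  fix x a :: real assume "0 < x" "a < 1"
  then have "eventually (\<lambda>j. a < \<nu> (((1/2) ^ j) *\<^sub>R v) (ereal x)) sequentially"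
    using strong_conv_scaleR_half_pow[of v] by (intro order_tendstoD(1)) (auto simp: strong_conv_iff)
  then obtain j where j: "a < \<nu> (((1/2) ^ j) *\<^sub>R v) (ereal x)"
    using eventually_happens' sequentially_bot by blast
  have "eventually (\<lambda>n. \<bar>t n\<bar> < (1/2) ^ j) sequentially"
    by (rule order_tendstoD(2)[OF tendsto_rabs_zero[OF assms]]) simp
  then show "eventually (\<lambda>n. a < \<nu> (t n *\<^sub>R v - 0) (ereal x)) sequentially"
  proof eventually_elim
    case (elim n)
    then have "\<nu> (((1/2) ^ j) *\<^sub>R v) \<le> \<nu> (t n *\<^sub>R v)" by (intro nu_scaleR_antimono_abs) simp
    then show ?case using j le_funD[of "\<nu> (((1/2) ^ j) *\<^sub>R v)" "\<nu> (t n *\<^sub>R v)" "ereal x"] by simp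
  qed
qed

lemma strong_conv_scaleR:
  assumes "t \<longlonglongrightarrow> c"
  shows "strong_conv \<nu> (\<lambda>n. t n *\<^sub>R v) (c *\<^sub>R v)"
proof -
  have "strong_conv \<nu> (\<lambda>n. (t n - c) *\<^sub>R v) 0"
    using assms by (intro strong_conv_scaleR_zero) (simp add: LIM_zero)
  then show ?thesis by (simp add: strong_conv_iff scaleR_diff_left)
qed

lemma strong_conv_sum:
  assumes "finite B" "\<And>b. b \<in> B \<Longrightarrow> (\<lambda>n. u n b) \<longlonglongrightarrow> d b"
  shows "strong_conv \<nu> (\<lambda>n. \<Sum>b\<in>B. u n b *\<^sub>R b) (\<Sum>b\<in>B. d b *\<^sub>R b)"
  using assms
proof (induction B rule: finite_induct)
  case (insert b B)
  then show ?case by (simp add: strong_conv_add strong_conv_scaleR)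
qed (simp add: strong_conv_const)

text \<open>Here the limit \<open>L\<close> of the decreasing sequence \<open>\<nu> (2^j y)\<close> satisfies \<open>L \<le> Ts L L\<close>
  by continuity of \<open>Ts\<close>, and the lower bound \<open>R \<in> D_plus\<close> keeps it away from \<open>epsinf\<close>.\<close>
lemma eq_0_if_nu_scaleR_pow2_lower_bound:
  assumes R: "R \<in> D_plus" and le: "\<And>j. R \<le> \<nu> ((2 ^ j) *\<^sub>R y)"
  shows "y = 0"
proof -
  define F where "F j = \<nu> (((2::real) ^ j) *\<^sub>R y)" for j
  define H where "H t = (INF j. F j (ereal t))" for t
  have F: "F j \<in> Delta_plus" for j unfolding F_def by (rule nu_in_Delta_plus)
  have H: "pre_dfun H" unfolding H_def by (rule pre_dfun_INF) (use F in auto)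
  have L: "left_reg H \<in> Delta_plus" by (rule left_reg_in_Delta_plus[OF H])
  have bdd: "bdd_below (range (\<lambda>j. F j (ereal t)))" for t
    using Delta_plusD(1)[OF F] by (auto intro!: bdd_belowI)
  have F_Suc_le: "F (Suc j) \<le> Ts (F j) (F j)" for j
  proof -
    have "F (Suc j) = \<nu> (2 *\<^sub>R (((2::real) ^ j) *\<^sub>R y))" by (simp add: F_def)
    then show ?thesis unfolding F_def by (simp only: nu_scaleR_2)
  qed
  have wF: "weak_conv F (left_reg H)"
    unfolding H_def by (rule weak_conv_decseq[OF F]) (unfold F_def, intro nu_scaleR_antimono, auto)
  have "left_reg H \<le> Ts (left_reg H) (left_reg H)"
    by (rule weak_conv_sub_idempotent[OF triangle_function_Ts continuous_Ts F L wF F_Suc_le])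
  moreover have "left_reg H \<noteq> epsinf"
  proof
    have R': "R \<in> Delta_plus" using R by (simp add: D_plus_def)
    have "R \<le> left_reg H"
    proof (rule Delta_plus_le_left_reg[OF H R'])
      fix t show "R (ereal t) \<le> H t"
        unfolding H_def F_def by (rule cINF_greatest) (simp_all add: le_funD[OF le])
    qed
    moreover assume "left_reg H = epsinf"
    ultimately show False using le_epsinf_imp_eq[OF R'] D_plus_ne_epsinf[OF R] by simp
  qed
  ultimately have "left_reg H = eps0"
    by (rule archimedean_sub_idempotent[OF triangle_function_Ts archimedean_Ts L])
  moreover have "left_reg H \<le> \<nu> y"
  proof (rule Delta_plus_leI[OF L nu_in_Delta_plus])
    fix t
    have "left_reg H (ereal t) \<le> H t" by (rule left_reg_le[OF H])
    also have "\<dots> \<le> F 0 (ereal t)" unfolding H_def by (rule cINF_lower[OF bdd]) simp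
    finally show "left_reg H (ereal t) \<le> \<nu> y (ereal t)" by (simp add: F_def)
  qed
  ultimately have "\<nu> y = eps0" by (metis antisym Delta_plus_le_eps0 nu_in_Delta_plus)
  then show ?thesis by (simp add: nu_eq_eps0_iff)
qed

lemma eq_0_if_rescaled_strong_limit:
  assumes bounded: "D_bounded \<nu> A" and A: "\<And>n. xs n \<in> A"
    and c: "filterlim c at_top sequentially"
    and conv: "strong_conv \<nu> (\<lambda>n. (1 / c n) *\<^sub>R xs n) y"
  shows "y = 0"
proof (rule eq_0_if_nu_scaleR_pow2_lower_bound)
  show R: "prob_radius \<nu> A \<in> D_plus" using bounded by (simp add: D_bounded_def)
  fix j :: nat
  have "strong_conv \<nu> (\<lambda>n. (2 ^ j) *\<^sub>R ((1 / c n) *\<^sub>R xs n)) ((2 ^ j) *\<^sub>R y)"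
    by (rule strong_conv_scaleR_pow2[OF conv])
  then show "prob_radius \<nu> A \<le> \<nu> ((2 ^ j) *\<^sub>R y)"
  proof (rule strong_conv_imp_le_nu)
    show "prob_radius \<nu> A \<in> Delta_plus" using R by (simp add: D_plus_def)
    have "eventually (\<lambda>n. 2 ^ j \<le> c n) sequentially" using c by (simp add: filterlim_at_top)
    then show "eventually (\<lambda>n. prob_radius \<nu> A \<le> \<nu> ((2 ^ j) *\<^sub>R ((1 / c n) *\<^sub>R xs n))) sequentially"
    proof eventually_elim
      case (elim n)
      moreover have "0 < c n" using elim zero_less_power[of "2::real" j] by linarith
      ultimately have "\<bar>2 ^ j / c n\<bar> \<le> \<bar>1\<bar>" by (simp add: abs_of_pos divide_le_eq_1)
      then have "\<nu> (xs n) \<le> \<nu> ((2 ^ j / c n) *\<^sub>R xs n)"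
        using nu_scaleR_antimono_abs[of "2 ^ j / c n" 1 "xs n"] by simp
      then show ?case using order_trans[OF prob_radius_le_nu[OF A]] by simp
    qed
  qed
qed

end

section \<open>Finite dimensional spaces\<close>

lemma bounded_coords_convergent_subseq:
  fixes u :: "nat \<Rightarrow> 'b \<Rightarrow> real"
  assumes "finite B" "\<And>n b. b \<in> B \<Longrightarrow> \<bar>u n b\<bar> \<le> M"
  obtains r d where "strict_mono r" "\<And>b. b \<in> B \<Longrightarrow> (\<lambda>n. u (r n) b) \<longlonglongrightarrow> d b"
proof -
  have "bounded ((\<lambda>x. x b) ` range u)" if "b \<in> B" for b
    using assms(2)[OF that] by (auto simp: bounded_iff)
  then have "\<forall>C\<subseteq>B. \<exists>d r. strict_mono r \<and>
      (\<forall>e>0. eventually (\<lambda>n. \<forall>b\<in>C. dist (u (r n) b) (d b) < e) sequentially)"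
    by (intro compact_lemma_general[where unproj = id]) (simp_all add: assms(1))
  then obtain d r where r: "strict_mono r"
    and conv: "\<forall>e>0. eventually (\<lambda>n. \<forall>b\<in>B. dist (u (r n) b) (d b) < e) sequentially"
    by blast
  have "(\<lambda>n. u (r n) b) \<longlonglongrightarrow> d b" if "b \<in> B" for b
    unfolding tendsto_iff using conv that by (blast intro: eventually_mono)
  with r show thesis by (rule that)
qed

lemma unbounded_coords_normalized_subseq:
  fixes u :: "'i \<Rightarrow> 'b \<Rightarrow> real"
  assumes B: "finite B" and unbounded: "\<not> bdd_above (range (\<lambda>n. \<Sum>c\<in>B. \<bar>u n c\<bar>))"
  obtains \<sigma> d where "filterlim (\<lambda>k. \<Sum>c\<in>B. \<bar>u (\<sigma> k) c\<bar>) at_top sequentially"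
    "\<forall>b\<in>B. (\<lambda>k. u (\<sigma> k) b / (\<Sum>c\<in>B. \<bar>u (\<sigma> k) c\<bar>)) \<longlonglongrightarrow> d b"
    "(\<Sum>b\<in>B. \<bar>d b\<bar>) = 1"
proof -
  define S where "S n = (\<Sum>c\<in>B. \<bar>u n c\<bar>)" for n
  have "\<exists>n. real k < S n" for k using unbounded by (auto simp: bdd_above_def not_le S_def)
  then obtain \<sigma> where \<sigma>: "\<And>k. real k < S (\<sigma> k)" by metis
  have S_pos: "0 < S (\<sigma> k)" for k using \<sigma>[of k] by linarith
  define w where "w k b = u (\<sigma> k) b / S (\<sigma> k)" for k b
  have w_le: "\<bar>w k b\<bar> \<le> 1" if "b \<in> B" for k b
  proof -
    have "\<bar>u (\<sigma> k) b\<bar> \<le> S (\<sigma> k)" unfolding S_def by (rule member_le_sum) (use that B in auto)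
    then show ?thesis using S_pos[of k] by (simp add: w_def abs_divide)
  qed
  have w_sum: "(\<Sum>b\<in>B. \<bar>w k b\<bar>) = 1" for k
    using S_pos[of k] by (simp add: w_def abs_divide S_def flip: sum_divide_distrib)
  obtain \<rho> d where \<rho>: "strict_mono \<rho>" and wd: "\<And>b. b \<in> B \<Longrightarrow> (\<lambda>k. w (\<rho> k) b) \<longlonglongrightarrow> d b"
    using bounded_coords_convergent_subseq[OF B, of w 1] w_le by blast
  have "(\<lambda>k. \<Sum>b\<in>B. \<bar>w (\<rho> k) b\<bar>) \<longlonglongrightarrow> (\<Sum>b\<in>B. \<bar>d b\<bar>)"
    by (intro tendsto_sum tendsto_rabs wd)
  then have "(\<Sum>b\<in>B. \<bar>d b\<bar>) = 1" by (simp add: w_sum LIMSEQ_const_iff)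
  moreover have "eventually (\<lambda>k. real k \<le> S (\<sigma> (\<rho> k))) sequentially"
    using \<sigma> seq_suble[OF \<rho>] by (intro always_eventually allI) (meson le_less_trans less_imp_le of_nat_le_iff)
  then have "filterlim (\<lambda>k. S (\<sigma> (\<rho> k))) at_top sequentially"
    by (rule filterlim_at_top_mono[OF filterlim_real_sequentially])
  ultimately show thesis using that[of "\<sigma> \<circ> \<rho>" d] wd by (simp add: w_def S_def)
qed

context archimedean_pn_space
begin

lemma D_bounded_imp_coords_bounded:
  assumes B: "finite B" "independent B" and bounded: "D_bounded \<nu> A"
    and A: "\<And>n. xs n \<in> A" and coords: "\<And>n. xs n = (\<Sum>b\<in>B. u n b *\<^sub>R b)"
  shows "bdd_above (range (\<lambda>n. \<Sum>b\<in>B. \<bar>u n b\<bar>))"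
proof (rule ccontr)
  assume "\<not> ?thesis"
  then obtain \<sigma> d where lim: "filterlim (\<lambda>k. \<Sum>c\<in>B. \<bar>u (\<sigma> k) c\<bar>) at_top sequentially"
    and d: "\<forall>b\<in>B. (\<lambda>k. u (\<sigma> k) b / (\<Sum>c\<in>B. \<bar>u (\<sigma> k) c\<bar>)) \<longlonglongrightarrow> d b"
    and d_sum: "(\<Sum>b\<in>B. \<bar>d b\<bar>) = 1"
    by (rule unbounded_coords_normalized_subseq[OF B(1)])
  have "(\<Sum>b\<in>B. d b *\<^sub>R b) = 0"
  proof (rule eq_0_if_rescaled_strong_limit[OF bounded _ lim])
    show "xs (\<sigma> n) \<in> A" for n by (rule A)
    show "strong_conv \<nu> (\<lambda>k. (1 / (\<Sum>c\<in>B. \<bar>u (\<sigma> k) c\<bar>)) *\<^sub>R xs (\<sigma> k)) (\<Sum>b\<in>B. d b *\<^sub>R b)"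
      using strong_conv_sum[OF B(1) d[rule_format]] by (simp add: coords scaleR_sum_right)
  qed
  then have "\<forall>b\<in>B. d b = 0"
    using B unfolding real_vector.independent_explicit_finite_subsets by blast
  then show False using d_sum by simp
qed

lemma strong_closed_imp_D_compact:
  assumes B: "finite B" "independent B" "A \<subseteq> span B"
    and bounded: "D_bounded \<nu> A" and closed: "strong_closed \<nu> A"
  shows "D_compact \<nu> A"
  unfolding D_compact_def
proof (intro allI impI)
  fix xs assume A: "\<forall>n::nat. xs n \<in> A"
  have "\<forall>n. \<exists>c. xs n = (\<Sum>b\<in>B. c b *\<^sub>R b)"
    using A B(3) unfolding real_vector.span_finite[OF B(1)] by blast
  then obtain u where coords: "\<And>n. xs n = (\<Sum>b\<in>B. u n b *\<^sub>R b)" by metis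
  have "bdd_above (range (\<lambda>n. \<Sum>b\<in>B. \<bar>u n b\<bar>))"
    using A coords by (intro D_bounded_imp_coords_bounded[OF B(1,2) bounded, where xs = xs]) auto
  then obtain M where M: "\<And>n. (\<Sum>b\<in>B. \<bar>u n b\<bar>) \<le> M" by (auto simp: bdd_above_def)
  have "\<bar>u n b\<bar> \<le> M" if "b \<in> B" for n b
    using member_le_sum[of b B "\<lambda>b. \<bar>u n b\<bar>"] M[of n] that B(1) by simp
  then obtain \<rho> d where \<rho>: "strict_mono \<rho>" and ud: "\<And>b. b \<in> B \<Longrightarrow> (\<lambda>k. u (\<rho> k) b) \<longlonglongrightarrow> d b"
    using bounded_coords_convergent_subseq[OF B(1)] by blast
  have conv: "strong_conv \<nu> (xs \<circ> \<rho>) (\<Sum>b\<in>B. d b *\<^sub>R b)"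
    using strong_conv_sum[OF B(1) ud] by (simp add: o_def coords)
  moreover have "(\<Sum>b\<in>B. d b *\<^sub>R b) \<in> A"
    using strong_closed_imp_limit_in[OF closed _ conv] A by simp
  ultimately show "\<exists>r p. strict_mono r \<and> p \<in> A \<and> strong_conv \<nu> (xs \<circ> r) p"
    using \<rho> by blast
qed

end

theorem theorem28:
  fixes \<nu> :: "'v::real_vector \<Rightarrow> dfun" and T Ts :: "dfun \<Rightarrow> dfun \<Rightarrow> dfun"
    and \<nu>' :: "real \<Rightarrow> dfun" and T' Ts' :: "dfun \<Rightarrow> dfun \<Rightarrow> dfun"
    and A :: "'v set"
  assumes findim: "\<exists>B. finite B \<and> span B = (UNIV :: 'v set)"
    and pn: "pn_space \<nu> T Ts"
    and arch: "archimedean_tf Ts"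
    and not_inf: "\<forall>p. \<nu> p \<noteq> epsinf"
    and nuD: "\<forall>p. \<nu> p \<in> D_plus"
    and TD: "\<forall>F\<in>D_plus. \<forall>G\<in>D_plus. T F G \<in> D_plus"
    and pn': "pn_space \<nu>' T' Ts'"
    and arch': "archimedean_tf Ts'"
    and not_inf': "\<forall>r. \<nu>' r \<noteq> epsinf"
    and LG: "LG_property \<nu>'"
    and A_ne: "A \<noteq> {}"
  shows "D_compact \<nu> A \<longleftrightarrow> D_bounded \<nu> A \<and> strong_closed \<nu> A"
proof -
  (* The hypotheses on T and on the scalar space are not needed: coordinates are handled in
     the usual topology of the reals, and the Archimedean property of Ts alone makes
     scalar multiplication strongly continuous. *)
  interpret archimedean_pn_space \<nu> T Ts
    by unfold_locales (use pn arch not_inf in auto)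
  obtain B0 :: "'v set" where B0: "finite B0" "span B0 = UNIV" using findim by blast
  obtain B :: "'v set" where B: "independent B" "UNIV \<subseteq> span B"
    by (rule real_vector.maximal_independent_subset[of UNIV]) simp
  have "finite B" using real_vector.independent_span_bound[OF B0(1) B(1)] B0(2) by simp
  show ?thesis
  proof
    assume compact: "D_compact \<nu> A"
    have "D_bounded \<nu> A" using D_compact_imp_D_bounded[OF compact A_ne] nuD by blast
    with D_compact_imp_strong_closed[OF compact]
    show "D_bounded \<nu> A \<and> strong_closed \<nu> A" by blast
  next
    assume "D_bounded \<nu> A \<and> strong_closed \<nu> A"
    then show "D_compact \<nu> A"
      using \<open>finite B\<close> B by (intro strong_closed_imp_D_compact[of B]) auto
  qed
qed

end
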